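(* Let $S=\{g_1,\dots,g_d\}$ be a finite set of generator symbols, $\mathcal C$ a finite set of colors, and $T$ a finite set of Wang tiles on $\mathcal C$ and $S$. Then $T$ satisfies condition $(\star\star)'$ if and only if the family of graphs $\Gamma_1,\dots,\Gamma_d$ associated to $T$ satisfies condition $(\star\star)$.
   Context: A Wang tile on $\mathcal C$ and $S$ is a map $\tau: S\cup S^{-1}\to\mathcal C$. The graphs associated to $T$: for each $1\le i\le d$, $\Gamma_i$ is the directed graph with vertex set $T$ and an edge $\tau\to\tau'$ if and only if $\tau(g_i)=\tau'(g_i^{-1})$. A cycle in a directed graph $\Gamma$ is a closed walk $\overline{a_1,\dots,a_n}$ (vertices and edges may repeat) with edges $a_k\to a_{k+1}$ for $k<n$ and $a_n\to a_1$; it is simple if $a_1,\dots,a_n$ are pairwise distinct. For a cycle $w$ and vertex $a$, $|w|_a=\#\{k : a_k=a\}$. Let $\mathcal{SC}(\Gamma_i)=\{\omega_i^1,\dots,\omega_i^{m_i}\}$ be the (finite) set of simple cycles of $\Gamma_i$ (up to cyclic rotation). Condition $(\star\star)$: every $\Gamma_i$ contains at least one cycle, and there exist nonnegative reals $x_{i,j}$ ($1\le i\le d$, $1\le j\le m_i$), not all zero, such that for every vertex $a\in T$, $\sum_{j=1}^{m_1} x_{1,j}|\omega_1^j|_a=\sum_{j=1}^{m_2} x_{2,j}|\omega_2^j|_a=\dots=\sum_{j=1}^{m_d} x_{d,j}|\omega_d^j|_a$. Condition $(\star\star)'$: for $g\in S\cup S^{-1}$ and $c\in\mathcal C$ let $c_g=\{\tau\in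 T:\tau(g)=c\}$. $T$ satisfies $(\star\star)'$ if there exist nonnegative reals $(x_\tau)_{\tau\in T}$, not all zero, with $\sum_{\tau\in c_g}x_\tau=\sum_{\tau\in c_{g^{-1}}}x_\tau$ for all $g\in S$ and all $c\in\mathcal C$. *)

theory Defs
  imports Complex_Main
begin

text \<open>Generators are elements of a set S :: 'g set; the symbol set S \<union> S^-1 is
  encoded as pairs (g, inv) with g \<in> S, where (g, False) stands for g and
  (g, True) stands for g^-1.  A Wang tile is a map from these symbols to colours.\<close>

type_synonym ('g, 'c) wang_tile = "'g \<times> bool \<Rightarrow> 'c"

definition is_wang_tile :: "'g set \<Rightarrow> 'c set \<Rightarrow> ('g, 'c) wang_tile \<Rightarrow> bool" where
  "is_wang_tile S C \<tau> \<longleftrightarrow>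
     (\<forall>g\<in>S. \<forall>b. \<tau> (g, b) \<in> C) \<and> (\<forall>g b. g \<notin> S \<longrightarrow> \<tau> (g, b) = undefined)"

definition gedge :: "('g, 'c) wang_tile set \<Rightarrow> 'g \<Rightarrow> ('g, 'c) wang_tile \<Rightarrow> ('g, 'c) wang_tile \<Rightarrow> bool" where
  "gedge T g \<tau> \<tau>' \<longleftrightarrow> \<tau> \<in> T \<and> \<tau>' \<in> T \<and> \<tau> (g, False) = \<tau>' (g, True)"

definition is_cycle :: "('g, 'c) wang_tile set \<Rightarrow> 'g \<Rightarrow> ('g, 'c) wang_tile list \<Rightarrow> bool" where
  "is_cycle T g xs \<longleftrightarrow> xs \<noteq> [] \<and> set xs \<subseteq> T \<and>
     (\<forall>k. Suc k < length xs \<longrightarrow> gedge T g (xs ! k) (xs ! Suc k)) \<and>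
     gedge T g (last xs) (hd xs)"

definition is_simple_cycle :: "('g, 'c) wang_tile set \<Rightarrow> 'g \<Rightarrow> ('g, 'c) wang_tile list \<Rightarrow> bool" where
  "is_simple_cycle T g xs \<longleftrightarrow> is_cycle T g xs \<and> distinct xs"

definition rot_class :: "'a list \<Rightarrow> 'a list set" where
  "rot_class xs = {rotate k xs | k. True}"

definition simple_cycles :: "('g, 'c) wang_tile set \<Rightarrow> 'g \<Rightarrow> ('g, 'c) wang_tile list set set" where
  "simple_cycles T g = {rot_class xs | xs. is_simple_cycle T g xs}"

text \<open>|w|_a for a cycle class w (independent of the representative).\<close>
definition occ :: "'a list set \<Rightarrow> 'a \<Rightarrow> nat" where
  "occ w a = count_list (SOME xs. xs \<in> w) a"

definition star_star :: "'g set \<Rightarrow> ('g, 'c) wang_tile set \<Rightarrow> bool" where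
  "star_star S T \<longleftrightarrow>
     (\<forall>g\<in>S. \<exists>xs. is_cycle T g xs) \<and>
     (\<exists>x :: 'g \<Rightarrow> ('g, 'c) wang_tile list set \<Rightarrow> real.
        (\<forall>g\<in>S. \<forall>w\<in>simple_cycles T g. x g w \<ge> 0) \<and>
        (\<exists>g\<in>S. \<exists>w\<in>simple_cycles T g. x g w \<noteq> 0) \<and>
        (\<forall>a\<in>T. \<forall>g\<in>S. \<forall>h\<in>S.
           (\<Sum>w\<in>simple_cycles T g. x g w * real (occ w a)) =
           (\<Sum>w\<in>simple_cycles T h. x h w * real (occ w a))))"

definition star_star' :: "'g set \<Rightarrow> 'c set \<Rightarrow> ('g, 'c) wang_tile set \<Rightarrow> bool" where
  "star_star' S C T \<longleftrightarrow>
     (\<exists>x :: ('g, 'c) wang_tile \<Rightarrow> real.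
        (\<forall>\<tau>\<in>T. x \<tau> \<ge> 0) \<and> (\<exists>\<tau>\<in>T. x \<tau> \<noteq> 0) \<and>
        (\<forall>g\<in>S. \<forall>c\<in>C.
           (\<Sum>\<tau>\<in>{\<tau>\<in>T. \<tau> (g, False) = c}. x \<tau>) =
           (\<Sum>\<tau>\<in>{\<tau>\<in>T. \<tau> (g, True) = c}. x \<tau>)))"

end

theory Submission
  imports Defs
begin

text \<open>For a fixed generator g, (\<star>\<star>)' for a weight x :: T \<Rightarrow> real says that x is a
  nonnegative circulation on \<Gamma>_g: at every colour c, the weight of the tiles whose
  g-side carries c equals the weight of the tiles whose g^-1-side carries c.  Every
  cycle of \<Gamma>_g passes through as many tiles of the first kind as of the second, so
  nonnegative combinations of simple cycles are circulations.  Conversely, the support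
  of a nonzero nonnegative circulation contains a simple cycle; subtracting it with
  the minimal weight along it shrinks the support, so by induction every nonnegative
  circulation is a nonnegative combination of simple cycles.  Applied for every g
  simultaneously, this turns one solution of (\<star>\<star>)' into one of (\<star>\<star>) and back.\<close>

definition color_balanced ::
    "('g, 'c) wang_tile set \<Rightarrow> 'g \<Rightarrow> (('g, 'c) wang_tile \<Rightarrow> real) \<Rightarrow> bool" where
  "color_balanced T g x \<longleftrightarrow>
     (\<forall>c. (\<Sum>\<tau>\<in>{\<tau>\<in>T. \<tau> (g, False) = c}. x \<tau>) = (\<Sum>\<tau>\<in>{\<tau>\<in>T. \<tau> (g, True) = c}. x \<tau>))"

definition cycle_sum ::
    "('g, 'c) wang_tile set \<Rightarrow> 'g \<Rightarrow> (('g, 'c) wang_tile list set \<Rightarrow> real) \<Rightarrow>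
     ('g, 'c) wang_tile \<Rightarrow> real" where
  "cycle_sum T g y a = (\<Sum>w\<in>simple_cycles T g. y w * real (occ w a))"

lemma count_list_rotate1 [simp]: "count_list (rotate1 xs) a = count_list xs a"
  by (cases xs) auto

lemma count_list_rotate [simp]: "count_list (rotate k xs) a = count_list xs a"
  by (induction k) (simp_all add: rotate_Suc)

lemma occ_rot_class: "occ (rot_class xs) a = count_list xs a"
proof -
  have "xs \<in> rot_class xs"
    unfolding rot_class_def by (auto intro: exI[of _ 0])
  then have "(SOME ys. ys \<in> rot_class xs) \<in> rot_class xs" by (rule someI)
  then show ?thesis unfolding occ_def rot_class_def by auto
qed

lemma count_list_distinct: "distinct xs \<Longrightarrow> count_list xs a = (if a \<in> set xs then 1 else 0)"
  by (induction xs) auto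

lemma sum_count_list_fiber:
  assumes "finite T" "set xs \<subseteq> T"
  shows "(\<Sum>\<tau>\<in>{\<tau>\<in>T. f \<tau> = c}. count_list xs \<tau>) = count_list (map f xs) c"
proof -
  have "(\<Sum>\<tau>\<in>{\<tau>\<in>T. f \<tau> = c}. count_list xs \<tau>) =
      (\<Sum>\<tau>\<in>{\<tau>\<in>T. f \<tau> = c}. count_list (filter (\<lambda>\<tau>. f \<tau> = c) xs) \<tau>)"
    by (intro sum.cong)
      (auto simp: count_list_eq_length_filter filter_filter intro!: arg_cong[where f = length] filter_cong)
  also have "\<dots> = length (filter (\<lambda>\<tau>. f \<tau> = c) xs)"
    using assms by (intro sum_count_set) auto
  finally show ?thesis by (simp add: count_list_eq_length_filter filter_map comp_def eq_commute)
qed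

subsection \<open>Cycles are circulations\<close>

lemma is_cycle_map_rotate1:
  assumes "is_cycle T g xs"
  shows "map (\<lambda>\<tau>. \<tau> (g, False)) xs = map (\<lambda>\<tau>. \<tau> (g, True)) (rotate1 xs)"
proof (rule nth_equalityI)
  fix k assume "k < length (map (\<lambda>\<tau>. \<tau> (g, False)) xs)"
  then have k: "k < length xs" by simp
  have ne: "xs \<noteq> []" using assms unfolding is_cycle_def by auto
  show "map (\<lambda>\<tau>. \<tau> (g, False)) xs ! k = map (\<lambda>\<tau>. \<tau> (g, True)) (rotate1 xs) ! k"
  proof (cases "Suc k < length xs")
    case True
    then have "gedge T g (xs ! k) (xs ! Suc k)" using assms unfolding is_cycle_def by auto
    then show ?thesis using True k by (simp add: nth_rotate1 gedge_def)
  next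
    case False
    then have "Suc k = length xs" using k by simp
    then have "xs ! k = last xs" "Suc k mod length xs = 0"
      using ne by (auto simp: last_conv_nth dest: sym)
    moreover have "gedge T g (last xs) (hd xs)" using assms unfolding is_cycle_def by auto
    ultimately show ?thesis using k ne by (simp add: nth_rotate1 gedge_def hd_conv_nth)
  qed
qed simp

lemma color_balanced_count_list:
  assumes "is_cycle T g xs" "finite T"
  shows "color_balanced T g (\<lambda>\<tau>. real (count_list xs \<tau>))"
  unfolding color_balanced_def
proof
  fix c
  have xsT: "set xs \<subseteq> T" using assms(1) unfolding is_cycle_def by auto
  have "count_list (map (\<lambda>\<tau>. \<tau> (g, False)) xs) c = count_list (map (\<lambda>\<tau>. \<tau> (g, True)) xs) c"
    using is_cycle_map_rotate1[OF assms(1)] by (metis count_list_rotate1 rotate1_map)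
  then show "(\<Sum>\<tau>\<in>{\<tau>\<in>T. \<tau> (g, False) = c}. real (count_list xs \<tau>)) =
      (\<Sum>\<tau>\<in>{\<tau>\<in>T. \<tau> (g, True) = c}. real (count_list xs \<tau>))"
    by (simp only: flip: of_nat_sum) (simp add: sum_count_list_fiber[OF assms(2) xsT])
qed

lemma color_balanced_cong:
  assumes "\<And>\<tau>. \<tau> \<in> T \<Longrightarrow> x \<tau> = x' \<tau>"
  shows "color_balanced T g x \<longleftrightarrow> color_balanced T g x'"
proof -
  have "sum x {\<tau>\<in>T. P \<tau>} = sum x' {\<tau>\<in>T. P \<tau>}" for P using assms by (intro sum.cong) auto
  then show ?thesis unfolding color_balanced_def by simp
qed

lemma color_balanced_diff:
  "color_balanced T g x \<Longrightarrow> color_balanced T g x' \<Longrightarrow> color_balanced T g (\<lambda>\<tau>. x \<tau> - x' \<tau>)"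
  unfolding color_balanced_def by (simp add: sum_subtractf)

lemma color_balanced_cmult:
  "color_balanced T g x \<Longrightarrow> color_balanced T g (\<lambda>\<tau>. e * x \<tau>)"
  unfolding color_balanced_def by (simp flip: sum_distrib_left)

lemma color_balanced_sum:
  "(\<And>i. i \<in> I \<Longrightarrow> color_balanced T g (f i)) \<Longrightarrow> color_balanced T g (\<lambda>\<tau>. \<Sum>i\<in>I. f i \<tau>)"
  unfolding color_balanced_def by (subst (1 2) sum.swap) simp

lemma color_balanced_cycle_sum:
  assumes "finite T"
  shows "color_balanced T g (cycle_sum T g y)"
  unfolding cycle_sum_def
proof (intro color_balanced_sum color_balanced_cmult)
  fix w assume "w \<in> simple_cycles T g"
  then obtain xs where "w = rot_class xs" "is_cycle T g xs"
    unfolding simple_cycles_def is_simple_cycle_def by blast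
  then show "color_balanced T g (\<lambda>\<tau>. real (occ w \<tau>))"
    using color_balanced_count_list[OF _ assms] by (simp add: occ_rot_class)
qed

subsection \<open>Cycle decomposition of circulations\<close>

lemma finite_simple_cycles:
  assumes "finite T"
  shows "finite (simple_cycles T g)"
proof -
  have "simple_cycles T g \<subseteq> rot_class ` {xs. set xs \<subseteq> T \<and> length xs \<le> card T}"
  proof
    fix w assume "w \<in> simple_cycles T g"
    then obtain xs where w: "w = rot_class xs" "set xs \<subseteq> T" "distinct xs"
      unfolding simple_cycles_def is_simple_cycle_def is_cycle_def by auto
    then have "length xs \<le> card T" using assms by (metis card_mono distinct_card)
    with w show "w \<in> rot_class ` {xs. set xs \<subseteq> T \<and> length xs \<le> card T}" by auto
  qed
  moreover have "finite {xs. set xs \<subseteq> T \<and> length xs \<le> card T}"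
    using finite_lists_length_le[OF assms] by simp
  ultimately show ?thesis by (meson finite_imageI finite_subset)
qed

lemma finite_range_first_repeat:
  fixes s :: "nat \<Rightarrow> 'a"
  assumes "finite (range s)"
  obtains i j where "i < j" "s i = s j" "inj_on s {i..<j}"
proof -
  have "\<not> inj s" using assms finite_imageD by blast
  then obtain i j where "i < j" "s i = s j" unfolding inj_def by (metis nat_neq_iff)
  define J where "J = (LEAST j. \<exists>i<j. s i = s j)"
  have "\<exists>i<J. s i = s J"
    unfolding J_def by (rule LeastI[of _ j]) (use \<open>i < j\<close> \<open>s i = s j\<close> in auto)
  then obtain I where "I < J" "s I = s J" by auto
  moreover have "s a \<noteq> s b" if "a < b" "b < J" for a b
    using that not_less_Least[of b "\<lambda>j. \<exists>i<j. s i = s j"] unfolding J_def by blast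
  then have "inj_on s {I..<J}" unfolding inj_on_def by (metis atLeastLessThan_iff nat_neq_iff)
  ultimately show ?thesis using that by blast
qed

lemma exists_simple_cycle:
  assumes "finite P" "P \<noteq> {}" "\<forall>\<tau>\<in>P. \<exists>\<tau>'\<in>P. gedge T g \<tau> \<tau>'"
  obtains xs where "is_simple_cycle T g xs" "set xs \<subseteq> P"
proof -
  obtain f where f: "\<forall>\<tau>\<in>P. f \<tau> \<in> P \<and> gedge T g \<tau> (f \<tau>)" using assms(3) by metis
  obtain \<tau>\<^sub>0 where "\<tau>\<^sub>0 \<in> P" using assms(2) by auto
  define s where "s n = (f ^^ n) \<tau>\<^sub>0" for n
  have sP: "s n \<in> P" for n by (induction n) (simp_all add: s_def \<open>\<tau>\<^sub>0 \<in> P\<close> f)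
  have s_edge: "gedge T g (s n) (s (Suc n))" for n using f sP by (simp add: s_def)
  have "finite (range s)" using sP by (intro finite_subset[OF _ assms(1)]) auto
  then obtain i j where ij: "i < j" "s i = s j" "inj_on s {i..<j}"
    by (rule finite_range_first_repeat)
  define xs where "xs = map s [i..<j]"
  have "last xs = s (j - 1)" "hd xs = s i"
    using \<open>i < j\<close> by (simp_all add: xs_def last_map hd_map)
  moreover have "gedge T g (s (j - 1)) (s i)"
    using s_edge[of "j - 1"] \<open>i < j\<close> \<open>s i = s j\<close> by simp
  moreover have "gedge T g (xs ! k) (xs ! Suc k)" if "Suc k < length xs" for k
    using that s_edge by (simp add: xs_def)
  moreover have "set xs \<subseteq> T" using s_edge by (auto simp: xs_def gedge_def)
  moreover have "distinct xs" "set xs \<subseteq> P" "xs \<noteq> []"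
    using ij sP by (auto simp: xs_def distinct_map)
  ultimately have "is_simple_cycle T g xs" unfolding is_simple_cycle_def is_cycle_def by simp
  then show ?thesis using \<open>set xs \<subseteq> P\<close> by (rule that)
qed

lemma color_balanced_successor:
  assumes "finite T" "\<forall>\<tau>\<in>T. x \<tau> \<ge> 0" "color_balanced T g x" "\<tau> \<in> T" "x \<tau> > 0"
  obtains \<tau>' where "\<tau>' \<in> T" "x \<tau>' > 0" "gedge T g \<tau> \<tau>'"
proof -
  define c where "c = \<tau> (g, False)"
  have "x \<tau> \<le> (\<Sum>\<tau>\<in>{\<tau>\<in>T. \<tau> (g, False) = c}. x \<tau>)"
    using assms(1,2,4) unfolding c_def by (intro member_le_sum) auto
  also have "\<dots> = (\<Sum>\<tau>\<in>{\<tau>\<in>T. \<tau> (g, True) = c}. x \<tau>)"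
    using assms(3) unfolding color_balanced_def by blast
  finally have "(\<Sum>\<tau>\<in>{\<tau>\<in>T. \<tau> (g, True) = c}. x \<tau>) \<noteq> 0" using assms(5) by linarith
  then obtain \<tau>' where "\<tau>' \<in> T" "\<tau>' (g, True) = c" "x \<tau>' \<noteq> 0"
    by (auto elim: sum.not_neutral_contains_not_neutral)
  moreover have "gedge T g \<tau> \<tau>'" using assms(4) calculation unfolding gedge_def c_def by simp
  ultimately show ?thesis using assms(2) that by force
qed

text \<open>e is the minimal weight along a simple cycle inside the support, so subtracting e times
  the cycle kills the weight of at least one tile.\<close>

lemma color_balanced_remove_cycle:
  assumes "finite T" "\<forall>\<tau>\<in>T. x \<tau> \<ge> 0" "color_balanced T g x" "\<exists>\<tau>\<in>T. x \<tau> \<noteq> 0"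
  obtains xs e where "is_simple_cycle T g xs" "e > 0"
    "\<forall>\<tau>\<in>T. x \<tau> - e * real (count_list xs \<tau>) \<ge> 0"
    "{\<tau>\<in>T. x \<tau> - e * real (count_list xs \<tau>) \<noteq> 0} \<subset> {\<tau>\<in>T. x \<tau> \<noteq> 0}"
proof -
  define P where "P = {\<tau>\<in>T. x \<tau> \<noteq> 0}"
  have pos: "x \<tau> > 0" if "\<tau> \<in> P" for \<tau> using that assms(2) by (force simp: P_def)
  have "\<forall>\<tau>\<in>P. \<exists>\<tau>'\<in>P. gedge T g \<tau> \<tau>'"
  proof
    fix \<tau> assume "\<tau> \<in> P"
    then obtain \<tau>' where "\<tau>' \<in> T" "x \<tau>' > 0" "gedge T g \<tau> \<tau>'"
      using color_balanced_successor[OF assms(1-3)] pos unfolding P_def by blast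
    then show "\<exists>\<tau>'\<in>P. gedge T g \<tau> \<tau>'" unfolding P_def by force
  qed
  moreover have "finite P" "P \<noteq> {}" using assms(1,4) by (auto simp: P_def)
  ultimately obtain xs where xs: "is_simple_cycle T g xs" "set xs \<subseteq> P"
    using exists_simple_cycle by metis
  have cnt: "count_list xs \<tau> = (if \<tau> \<in> set xs then 1 else 0)" for \<tau>
    using xs(1) by (simp add: is_simple_cycle_def count_list_distinct)
  have "xs \<noteq> []" using xs(1) unfolding is_simple_cycle_def is_cycle_def by simp
  define e where "e = Min (x ` set xs)"
  have "e \<in> x ` set xs" unfolding e_def using \<open>xs \<noteq> []\<close> by (intro Min_in) auto
  then obtain \<tau>\<^sub>0 where \<tau>\<^sub>0: "\<tau>\<^sub>0 \<in> set xs" "x \<tau>\<^sub>0 = e" by auto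
  have e_le: "e \<le> x \<tau>" if "\<tau> \<in> set xs" for \<tau> unfolding e_def using that by simp
  show ?thesis
  proof (rule that[OF xs(1)])
    show "e > 0" using pos \<tau>\<^sub>0 xs(2) by auto
    show "\<forall>\<tau>\<in>T. x \<tau> - e * real (count_list xs \<tau>) \<ge> 0" using assms(2) e_le by (simp add: cnt)
    show "{\<tau>\<in>T. x \<tau> - e * real (count_list xs \<tau>) \<noteq> 0} \<subset> {\<tau>\<in>T. x \<tau> \<noteq> 0}"
      using xs(2) \<tau>\<^sub>0 unfolding P_def by (auto simp: cnt split: if_splits)
  qed
qed

lemma cycle_sum_add_cycle:
  assumes "finite T" "W \<in> simple_cycles T g"
  shows "cycle_sum T g (y(W := y W + e)) a = cycle_sum T g y a + e * real (occ W a)"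
proof -
  have "(y(W := y W + e)) w * real (occ w a) =
      y w * real (occ w a) + (if w = W then e * real (occ W a) else 0)" for w
    by (simp add: algebra_simps)
  then show ?thesis
    using assms finite_simple_cycles[OF assms(1)] by (simp add: cycle_sum_def sum.distrib)
qed

lemma cycle_decomposition:
  assumes "finite T" "\<forall>\<tau>\<in>T. x \<tau> \<ge> 0" "color_balanced T g x"
  shows "\<exists>y. (\<forall>w\<in>simple_cycles T g. y w \<ge> 0) \<and> (\<forall>a\<in>T. cycle_sum T g y a = x a)"
  using assms(2,3)
proof (induction "card {\<tau>\<in>T. x \<tau> \<noteq> 0}" arbitrary: x rule: less_induct)
  case less
  show ?case
  proof (cases "\<exists>\<tau>\<in>T. x \<tau> \<noteq> 0")
    case False
    then show ?thesis by (intro exI[of _ "\<lambda>_. 0"]) (simp add: cycle_sum_def)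
  next
    case True
    then obtain xs e where xs: "is_simple_cycle T g xs" "e > 0"
      "\<forall>\<tau>\<in>T. x \<tau> - e * real (count_list xs \<tau>) \<ge> 0"
      "{\<tau>\<in>T. x \<tau> - e * real (count_list xs \<tau>) \<noteq> 0} \<subset> {\<tau>\<in>T. x \<tau> \<noteq> 0}"
      using color_balanced_remove_cycle[OF assms(1) less.prems] by blast
    define x' where "x' \<tau> = x \<tau> - e * real (count_list xs \<tau>)" for \<tau>
    have "card {\<tau>\<in>T. x' \<tau> \<noteq> 0} < card {\<tau>\<in>T. x \<tau> \<noteq> 0}"
      using psubset_card_mono[OF _ xs(4)] assms(1) unfolding x'_def by simp
    moreover have "\<forall>\<tau>\<in>T. x' \<tau> \<ge> 0" using xs(3) by (simp add: x'_def)
    moreover have "color_balanced T g x'"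
      unfolding x'_def using less.prems(2) color_balanced_count_list[OF _ assms(1)] xs(1)
      by (intro color_balanced_diff color_balanced_cmult) (auto simp: is_simple_cycle_def)
    ultimately obtain y
      where y: "\<forall>w\<in>simple_cycles T g. y w \<ge> 0" "\<forall>a\<in>T. cycle_sum T g y a = x' a"
      using less.hyps by blast
    define W where "W = rot_class xs"
    have W: "W \<in> simple_cycles T g" using xs(1) by (auto simp: W_def simple_cycles_def)
    show ?thesis
    proof (intro exI[of _ "y(W := y W + e)"] conjI ballI)
      fix w assume "w \<in> simple_cycles T g"
      then show "(y(W := y W + e)) w \<ge> 0" using y(1) W \<open>e > 0\<close> by simp
    next
      fix a assume "a \<in> T"
      then show "cycle_sum T g (y(W := y W + e)) a = x a"
        using y(2) cycle_sum_add_cycle[OF assms(1) W, of y e a]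
        by (simp add: W_def occ_rot_class x'_def)
    qed
  qed
qed

lemma cycle_sum_nonneg:
  "\<forall>w\<in>simple_cycles T g. y w \<ge> 0 \<Longrightarrow> cycle_sum T g y a \<ge> 0"
  unfolding cycle_sum_def by (intro sum_nonneg) simp

lemma cycle_sum_pos:
  assumes "finite T" "\<forall>w\<in>simple_cycles T g. y w \<ge> 0" "W \<in> simple_cycles T g" "y W > 0"
  obtains a where "a \<in> T" "cycle_sum T g y a > 0"
proof -
  obtain xs where xs: "W = rot_class xs" "is_cycle T g xs"
    using assms(3) unfolding simple_cycles_def is_simple_cycle_def by blast
  then have "hd xs \<in> T" "hd xs \<in> set xs" unfolding is_cycle_def by auto
  then have "count_list xs (hd xs) \<noteq> 0" by (simp add: count_list_0_iff)
  then have "occ W (hd xs) > 0" using xs(1) by (simp add: occ_rot_class)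
  then have "cycle_sum T g y (hd xs) > 0"
    unfolding cycle_sum_def using assms finite_simple_cycles[OF assms(1)]
    by (intro sum_pos2[of _ W]) auto
  with \<open>hd xs \<in> T\<close> show ?thesis by (rule that)
qed

text \<open>Colours outside C do not occur on tiles, so only the balance at colours in C matters.\<close>

lemma star_star'_iff_color_balanced:
  assumes "\<forall>\<tau>\<in>T. is_wang_tile S C \<tau>"
  shows "star_star' S C T \<longleftrightarrow>
    (\<exists>x. (\<forall>\<tau>\<in>T. x \<tau> \<ge> 0) \<and> (\<exists>\<tau>\<in>T. x \<tau> \<noteq> 0) \<and> (\<forall>g\<in>S. color_balanced T g x))"
proof -
  have empty: "{\<tau>\<in>T. \<tau> (g, b) = c} = {}" if "g \<in> S" "c \<notin> C" for g b c
    using assms that by (auto simp: is_wang_tile_def)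
  have "color_balanced T g x \<longleftrightarrow> (\<forall>c\<in>C.
      (\<Sum>\<tau>\<in>{\<tau>\<in>T. \<tau> (g, False) = c}. x \<tau>) = (\<Sum>\<tau>\<in>{\<tau>\<in>T. \<tau> (g, True) = c}. x \<tau>))"
    if "g \<in> S" for g x
    unfolding color_balanced_def
  proof (intro iffI allI)
    fix c
    assume "\<forall>c\<in>C. (\<Sum>\<tau>\<in>{\<tau>\<in>T. \<tau> (g, False) = c}. x \<tau>) = (\<Sum>\<tau>\<in>{\<tau>\<in>T. \<tau> (g, True) = c}. x \<tau>)"
    then show "(\<Sum>\<tau>\<in>{\<tau>\<in>T. \<tau> (g, False) = c}. x \<tau>) = (\<Sum>\<tau>\<in>{\<tau>\<in>T. \<tau> (g, True) = c}. x \<tau>)"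
    proof (cases "c \<in> C")
      case False
      then have "{\<tau>\<in>T. \<tau> (g, False) = c} = {}" "{\<tau>\<in>T. \<tau> (g, True) = c} = {}"
        using empty[OF that] by blast+
      then show ?thesis by (simp only: sum.empty)
    qed blast
  qed auto
  then show ?thesis unfolding star_star'_def by auto
qed

lemma star_star_iff_cycle_sum:
  "star_star S T \<longleftrightarrow> (\<forall>g\<in>S. \<exists>xs. is_cycle T g xs) \<and>
     (\<exists>y. (\<forall>g\<in>S. \<forall>w\<in>simple_cycles T g. y g w \<ge> 0) \<and>
        (\<exists>g\<in>S. \<exists>w\<in>simple_cycles T g. y g w \<noteq> 0) \<and>
        (\<forall>a\<in>T. \<forall>g\<in>S. \<forall>h\<in>S. cycle_sum T g (y g) a = cycle_sum T h (y h) a))"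
  unfolding star_star_def cycle_sum_def ..

lemma star_star_if_color_balanced:
  assumes "finite T" "S \<noteq> {}" "\<forall>\<tau>\<in>T. x \<tau> \<ge> 0" "\<tau>\<^sub>0 \<in> T" "x \<tau>\<^sub>0 \<noteq> 0"
    and "\<forall>g\<in>S. color_balanced T g x"
  shows "star_star S T"
proof -
  have "\<forall>g\<in>S. \<exists>y. (\<forall>w\<in>simple_cycles T g. y w \<ge> 0) \<and> (\<forall>a\<in>T. cycle_sum T g y a = x a)"
    using cycle_decomposition[OF assms(1,3)] assms(6) by blast
  then obtain y where y: "\<forall>g\<in>S. (\<forall>w\<in>simple_cycles T g. y g w \<ge> 0) \<and>
      (\<forall>a\<in>T. cycle_sum T g (y g) a = x a)"
    by (rule bchoice[THEN exE])
  have y_nonzero: "\<exists>w\<in>simple_cycles T g. y g w \<noteq> 0" if "g \<in> S" for g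
  proof -
    have "cycle_sum T g (y g) \<tau>\<^sub>0 \<noteq> 0" using y that assms(4,5) by simp
    then obtain w where "w \<in> simple_cycles T g" "y g w * real (occ w \<tau>\<^sub>0) \<noteq> 0"
      unfolding cycle_sum_def by (rule sum.not_neutral_contains_not_neutral)
    then show ?thesis by auto
  qed
  then have "\<forall>g\<in>S. \<exists>xs. is_cycle T g xs"
    unfolding simple_cycles_def is_simple_cycle_def by blast
  moreover have "\<exists>g\<in>S. \<exists>w\<in>simple_cycles T g. y g w \<noteq> 0" using y_nonzero assms(2) by blast
  ultimately show ?thesis
    using y unfolding star_star_iff_cycle_sum by (intro conjI exI[of _ y]) auto
qed

lemma color_balanced_if_star_star:
  assumes "finite T" "star_star S T"
  shows "\<exists>x. (\<forall>\<tau>\<in>T. x \<tau> \<ge> 0) \<and> (\<exists>\<tau>\<in>T. x \<tau> \<noteq> 0) \<and> (\<forall>g\<in>S. color_balanced T g x)"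
proof -
  obtain y g\<^sub>0 W where y_nonneg: "\<forall>g\<in>S. \<forall>w\<in>simple_cycles T g. y g w \<ge> 0"
    and y_eq: "\<forall>a\<in>T. \<forall>g\<in>S. \<forall>h\<in>S. cycle_sum T g (y g) a = cycle_sum T h (y h) a"
    and g\<^sub>0: "g\<^sub>0 \<in> S" "W \<in> simple_cycles T g\<^sub>0" "y g\<^sub>0 W \<noteq> 0"
    using assms(2) unfolding star_star_iff_cycle_sum by blast
  define x where "x = cycle_sum T g\<^sub>0 (y g\<^sub>0)"
  have "\<forall>w\<in>simple_cycles T g\<^sub>0. y g\<^sub>0 w \<ge> 0" using y_nonneg g\<^sub>0(1) by blast
  moreover have "y g\<^sub>0 W > 0" using calculation g\<^sub>0(2,3) by force
  ultimately obtain a where "a \<in> T" "x a > 0"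
    unfolding x_def using cycle_sum_pos[OF assms(1) _ g\<^sub>0(2)] by blast
  moreover have "\<forall>\<tau>\<in>T. x \<tau> \<ge> 0" using y_nonneg g\<^sub>0(1) by (simp add: x_def cycle_sum_nonneg)
  moreover have "color_balanced T g x" if "g \<in> S" for g
  proof -
    have "color_balanced T g (cycle_sum T g (y g))"
      by (rule color_balanced_cycle_sum[OF assms(1)])
    moreover have "x \<tau> = cycle_sum T g (y g) \<tau>" if "\<tau> \<in> T" for \<tau>
      using y_eq g\<^sub>0(1) \<open>g \<in> S\<close> that unfolding x_def by blast
    ultimately show ?thesis using color_balanced_cong[of T x "cycle_sum T g (y g)"] by blast
  qed
  ultimately show ?thesis by (intro exI[of _ x] conjI bexI[of _ a]) auto
qed

theorem mainTheorem1:
  fixes S :: "'g set" and C :: "'c set" and T :: "('g, 'c) wang_tile set"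
  assumes "finite S" and "S \<noteq> {}" and "finite C" and "finite T"
    and "\<forall>\<tau>\<in>T. is_wang_tile S C \<tau>"
  shows "star_star' S C T \<longleftrightarrow> star_star S T"
proof -
  have "star_star' S C T \<longleftrightarrow>
      (\<exists>x. (\<forall>\<tau>\<in>T. x \<tau> \<ge> 0) \<and> (\<exists>\<tau>\<in>T. x \<tau> \<noteq> 0) \<and> (\<forall>g\<in>S. color_balanced T g x))"
    using assms(5) by (rule star_star'_iff_color_balanced)
  also have "\<dots> \<longleftrightarrow> star_star S T"
    using star_star_if_color_balanced[OF assms(4,2)] color_balanced_if_star_star[OF assms(4)] by blast
  finally show ?thesis .
qed

end
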